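(* Let $f:\mathbb{R}\to\mathbb{R}$ satisfy $f(0)=0$ and $|f(u)-f(v)|\leq C|u-v|(e^{\lambda u^2}+e^{\lambda v^2})$ for all $u,v\in\mathbb{R}$, for some constants $C,\lambda>0$. Let $v\in L^\infty(\mathbb{R}^N)$ and $w_1,w_2\in\exp L^2(\mathbb{R}^N)$ with $\|w_1\|_{\exp L^2},\|w_2\|_{\exp L^2}\leq K$ for some $K>0$. Let $2\leq q<\infty$ and assume $4\lambda qK^2\leq1$. Then there exists a constant $C_q>0$ depending on $q$ such that $$\|f(w_1+v)-f(w_2+v)\|_{L^q}\leq C_q\,e^{2\lambda\|v\|_{L^\infty}^2}\|w_1-w_2\|_{\exp L^2}.$$
   Context: The Orlicz space $\exp L^2(\mathbb{R}^N)$ is the set of $u\in L^1_{loc}(\mathbb{R}^N)$ such that $\int_{\mathbb{R}^N}(e^{|u(x)|^2/\alpha^2}-1)\,dx<\infty$ for some $\alpha>0$, with the Luxemburg norm $\|u\|_{\exp L^2}=\inf\{\alpha>0:\int_{\mathbb{R}^N}(e^{|u(x)|^2/\alpha^2}-1)\,dx\leq 1\}$. *)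

theory Defs
  imports "HOL-Analysis.Analysis" "HOL-Probability.Essential_Supremum"
begin

text \<open>Functions on R^N are modelled as functions on a Euclidean space 'a
 (dimension DIM('a) = N), with Lebesgue measure.\<close>

definition L1_loc :: "('a::euclidean_space \<Rightarrow> real) set" where
  "L1_loc = {u. u \<in> borel_measurable lebesgue \<and>
                 (\<forall>S. compact S \<longrightarrow> set_integrable lebesgue S u)}"

definition expL2 :: "('a::euclidean_space \<Rightarrow> real) set" where
  "expL2 = {u. u \<in> L1_loc \<and>
     (\<exists>\<alpha>>0. (\<integral>\<^sup>+ x. ennreal (exp ((u x)\<^sup>2 / \<alpha>\<^sup>2) - 1) \<partial>lebesgue) < \<infinity>)}"

definition expL2_norm :: "('a::euclidean_space \<Rightarrow> real) \<Rightarrow> real" where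
  "expL2_norm u = Inf {\<alpha>. \<alpha> > 0 \<and>
     (\<integral>\<^sup>+ x. ennreal (exp ((u x)\<^sup>2 / \<alpha>\<^sup>2) - 1) \<partial>lebesgue) \<le> 1}"

definition Linf :: "('a::euclidean_space \<Rightarrow> real) set" where
  "Linf = {v. v \<in> borel_measurable lebesgue \<and>
              esssup lebesgue (\<lambda>x. ereal \<bar>v x\<bar>) < \<infinity>}"

definition Linf_norm :: "('a::euclidean_space \<Rightarrow> real) \<Rightarrow> real" where
  "Linf_norm v = real_of_ereal (esssup lebesgue (\<lambda>x. ereal \<bar>v x\<bar>))"

text \<open>q-th power of the L^q norm, as an extended nonnegative real:
  Lq_norm_pow q g = ||g||_{L^q}^q (possibly infinite).\<close>
definition Lq_norm_pow :: "real \<Rightarrow> ('a::euclidean_space \<Rightarrow> real) \<Rightarrow> ennreal" where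
  "Lq_norm_pow q g = (\<integral>\<^sup>+ x. ennreal (\<bar>g x\<bar> powr q) \<partial>lebesgue)"

end

theory Submission
  imports Defs
begin

text \<open>With \<open>E\<^sub>i = exp (2 lam w\<^sub>i\<^sup>2) - 1\<close> and \<open>M\<close> the \<open>L\<^sup>\<infinity>\<close> norm of \<open>v\<close>, the growth
  condition and \<open>(w + v)\<^sup>2 \<le> 2 w\<^sup>2 + 2 M\<^sup>2\<close> give pointwise
  \<open>|f (w\<^sub>1 + v) - f (w\<^sub>2 + v)| \<le> C exp (2 lam M\<^sup>2) |w\<^sub>1 - w\<^sub>2| (2 + E\<^sub>1 + E\<^sub>2)\<close>.
  For every \<open>a\<close> above the Luxemburg norm of \<open>w\<^sub>1 - w\<^sub>2\<close>, the bound
  \<open>t\<^sup>r \<le> (1 + 2 r\<^sup>r) (exp t - 1)\<close> gives \<open>\<integral> |w\<^sub>1 - w\<^sub>2|\<^sup>p \<le> c a\<^sup>p\<close> for \<open>p = q, 2q\<close>,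
  and \<open>4 lam q K\<^sup>2 \<le> 1\<close> gives \<open>E\<^sub>i\<^sup>2\<^sup>q \<le> exp (w\<^sub>i\<^sup>2 / K\<^sup>2) - 1\<close>, hence \<open>\<integral> E\<^sub>i\<^sup>2\<^sup>q \<le> 1\<close>.
  Splitting the mixed terms \<open>|w\<^sub>1 - w\<^sub>2|\<^sup>q E\<^sub>i\<^sup>q\<close> by AM-GM with weight \<open>a\<^sup>q\<close> makes every
  term of order \<open>a\<^sup>q\<close>; finally \<open>a\<close> decreases to the norm.\<close>

definition moment_const :: "real \<Rightarrow> real" where
  "moment_const r = 1 + 2 * r powr r"

lemma moment_const_ge_1: "1 \<le> moment_const r"
  unfolding moment_const_def by simp

lemma powr_le_moment_const_exp:
  fixes r t :: real
  assumes r: "1 \<le> r" and t: "0 \<le> t"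
  shows "t powr r \<le> moment_const r * (exp t - 1)"
proof -
  have exp_t: "0 \<le> exp t - 1" "t \<le> exp t - 1"
    using exp_ge_add_one_self[of t] t by linarith+
  show ?thesis
  proof (cases "t \<le> 1")
    case True
    have "t powr r \<le> t powr 1" using True t r by (intro powr_mono') auto
    also have "\<dots> \<le> exp t - 1" using t exp_t by simp
    also have "\<dots> \<le> moment_const r * (exp t - 1)"
      using exp_t moment_const_ge_1[of r] by (simp add: mult_le_cancel_right1)
    finally show ?thesis .
  next
    case False
    have "t powr r = r powr r * (t / r) powr r" using r t by (simp add: powr_divide)
    also have "\<dots> \<le> r powr r * exp (t / r) powr r"
      using exp_ge_add_one_self[of "t / r"] r t
      by (intro mult_left_mono powr_mono2) (auto simp del: exp_ge_add_one_self)
    also have "exp (t / r) powr r = exp t" using r by (simp add: powr_def)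
    also have "exp t \<le> 2 * (exp t - 1)"
    proof -
      have "1 + 1 \<le> exp t" using False by (intro order_trans[OF exp_ge_add_one_self exp_mono]) simp
      thus ?thesis by simp
    qed
    hence "r powr r * exp t \<le> r powr r * (2 * (exp t - 1))" by (simp add: mult_left_mono)
    also have "\<dots> \<le> moment_const r * (exp t - 1)"
      unfolding moment_const_def using exp_t by (simp add: algebra_simps)
    finally show ?thesis .
  qed
qed

lemma powr_add_le_add_powr:
  fixes a b p :: real
  assumes "0 \<le> a" "0 \<le> b" "1 \<le> p"
  shows "a powr p + b powr p \<le> (a + b) powr p"
proof -
  have split: "x powr p = x * x powr (p - 1)" if "0 \<le> x" for x :: real
    using that assms by (cases "x = 0") (auto simp: powr_diff)
  have "a * a powr (p - 1) + b * b powr (p - 1) \<le> a * (a + b) powr (p - 1) + b * (a + b) powr (p - 1)"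
    using assms by (intro add_mono mult_left_mono powr_mono2) auto
  also have "\<dots> = (a + b) powr p" using assms split[of "a + b"] by (simp add: algebra_simps)
  finally show ?thesis using assms split by simp
qed

lemma exp_minus_one_powr_le:
  fixes s p :: real
  assumes "0 \<le> s" "1 \<le> p"
  shows "(exp s - 1) powr p \<le> exp (p * s) - 1"
proof -
  have "(exp s - 1) powr p + 1 powr p \<le> exp s powr p"
    using powr_add_le_add_powr[of "exp s - 1" 1 p] exp_ge_add_one_self[of s] assms by simp
  also have "exp s powr p = exp (p * s)" by (simp add: powr_def mult.commute)
  finally show ?thesis by simp
qed

lemma exp_mult_minus_one_le:
  fixes \<theta> s :: real
  assumes "0 \<le> \<theta>" "\<theta> \<le> 1"
  shows "exp (\<theta> * s) - 1 \<le> \<theta> * (exp s - 1)"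
  using convex_onD[OF exp_convex, of \<theta> 0 s] assms by (simp add: algebra_simps)

lemma mult_le_weighted_squares:
  fixes x y t :: real
  assumes "0 < t"
  shows "x * y \<le> (x * x / t + t * (y * y)) / 2"
proof -
  have "t * (2 * (x * y)) \<le> t * (x * x / t + t * (y * y))"
    using assms sum_squares_ge_zero[of "x - t * y" 0] by (simp add: algebra_simps power2_eq_square)
  thus ?thesis using assms by simp
qed

text \<open>The factor \<open>3\<close> comes from \<open>2 + e1 + e2 \<le> 3 max 2 (max e1 e2)\<close>; the AM-GM weight
  \<open>t\<close> will be \<open>a powr q\<close>.\<close>
lemma powr_growth_split:
  fixes A q t d e1 e2 y :: real
  assumes A: "0 \<le> A" and q: "1 \<le> q" and t: "0 < t" and d: "0 \<le> d"
    and e: "0 \<le> e1" "0 \<le> e2" and y: "0 \<le> y" "y \<le> A * d * (2 + e1 + e2)"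
  shows "y powr q \<le> (3 * A) powr q * 2 powr q * d powr q + (3 * A) powr q / t * d powr (2 * q)
           + (3 * A) powr q * t / 2 * (e1 powr (2 * q) + e2 powr (2 * q))"
proof -
  define m where "m = max 2 (max e1 e2)"
  have m: "0 \<le> m" "2 + e1 + e2 \<le> 3 * m" by (auto simp: m_def)
  have "y \<le> 3 * A * d * m"
    using y mult_left_mono[OF m(2), of "A * d"] A d by (simp add: algebra_simps)
  hence "y powr q \<le> (3 * A * d * m) powr q" using y q by (intro powr_mono2) auto
  also have "\<dots> = (3 * A) powr q * d powr q * m powr q" using A d m by (simp add: powr_mult)
  also have "\<dots> \<le> (3 * A) powr q * d powr q * (2 powr q + e1 powr q + e2 powr q)"
    unfolding m_def by (intro mult_left_mono) (auto simp: max_def)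
  also have "\<dots> = (3 * A) powr q * 2 powr q * d powr q + (3 * A) powr q * (d powr q * e1 powr q)
       + (3 * A) powr q * (d powr q * e2 powr q)" by (simp add: algebra_simps)
  also have "\<dots> \<le> (3 * A) powr q * 2 powr q * d powr q
       + (3 * A) powr q * ((d powr q * d powr q / t + t * (e1 powr q * e1 powr q)) / 2)
       + (3 * A) powr q * ((d powr q * d powr q / t + t * (e2 powr q * e2 powr q)) / 2)"
    using t by (intro add_mono mult_left_mono mult_le_weighted_squares order_refl) auto
  also have "\<dots> = (3 * A) powr q * 2 powr q * d powr q + (3 * A) powr q / t * d powr (2 * q)
           + (3 * A) powr q * t / 2 * (e1 powr (2 * q) + e2 powr (2 * q))"
    by (simp add: powr_add[symmetric] algebra_simps add_divide_distrib)
  finally show ?thesis .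
qed

lemma ennreal_le_mult_powr_at_right:
  fixes n B q :: real
  assumes n: "0 \<le> n" and q: "0 < q" and B: "0 \<le> B"
    and above: "\<And>a. n < a \<Longrightarrow> X \<le> ennreal (B * a powr q)"
  shows "X \<le> ennreal (B * n powr q)"
proof -
  have "X < top" using above[of "n + 1"] by (simp add: order.strict_trans1)
  then obtain x where x: "X = ennreal x" "0 \<le> x" by (cases X) auto
  have "\<forall>\<^sub>F a in at_right n. 0 \<le> a"
    using eventually_at_right_less[of n] by (rule eventually_mono) (use n in auto)
  hence "((\<lambda>a. B * a powr q) \<longlongrightarrow> B * n powr q) (at_right n)"
    using q by (intro tendsto_intros tendsto_ident_at) auto
  moreover have "\<forall>\<^sub>F a in at_right n. x \<le> B * a powr q"
    using eventually_at_right_less[of n]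
    by (rule eventually_mono) (use above x B in \<open>auto simp: ennreal_le_iff\<close>)
  ultimately have "x \<le> B * n powr q" by (intro tendsto_lowerbound) auto
  thus ?thesis using x by (simp add: ennreal_leI)
qed

definition expL2_modular :: "('a::euclidean_space \<Rightarrow> real) \<Rightarrow> real \<Rightarrow> ennreal" where
  "expL2_modular u a = (\<integral>\<^sup>+ x. ennreal (exp ((u x)\<^sup>2 / a\<^sup>2) - 1) \<partial>lebesgue)"

lemma expL2_modular_antimono:
  assumes "0 < a" "a \<le> b"
  shows "expL2_modular u b \<le> expL2_modular u a"
  unfolding expL2_modular_def using assms
  by (intro nn_integral_mono ennreal_leI) (simp add: divide_left_mono power_mono)

lemma
  assumes "\<exists>a>0. expL2_modular u a \<le> 1"
  shows expL2_norm_nonneg: "0 \<le> expL2_norm u"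
    and expL2_modular_le_one_above_norm: "expL2_norm u < b \<Longrightarrow> expL2_modular u b \<le> 1"
proof -
  let ?S = "{a. a > 0 \<and> expL2_modular u a \<le> 1}"
  have S: "?S \<noteq> {}" and bdd: "bdd_below ?S"
    using assms by (auto intro: bdd_belowI[of _ 0])
  have norm: "expL2_norm u = Inf ?S" unfolding expL2_norm_def expL2_modular_def ..
  show "0 \<le> expL2_norm u" unfolding norm using S by (intro cInf_greatest) auto
  assume "expL2_norm u < b"
  then obtain a where "a \<in> ?S" "a < b" using cInf_less_iff[OF S bdd] norm by auto
  thus "expL2_modular u b \<le> 1" using expL2_modular_antimono[of a b u] by auto
qed

lemma expL2_measurable: "u \<in> expL2 \<Longrightarrow> u \<in> borel_measurable lebesgue"
  unfolding expL2_def L1_loc_def by auto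

text \<open>A finite modular is scaled below \<open>1\<close> using the convexity bound
  \<open>e\<^sup>\<theta>\<^sup>s - 1 \<le> \<theta> (e\<^sup>s - 1)\<close>.\<close>
lemma expL2_modular_le_one_exists:
  assumes "u \<in> expL2"
  shows "\<exists>a>0. expL2_modular u a \<le> 1"
proof -
  note meas = expL2_measurable[OF assms]
  obtain a0 where a0: "a0 > 0" "expL2_modular u a0 < \<infinity>"
    using assms unfolding expL2_def expL2_modular_def by auto
  then obtain r where r: "expL2_modular u a0 = ennreal r" "0 \<le> r"
    by (cases "expL2_modular u a0") auto
  define \<theta> where "\<theta> = 1 / (1 + r)"
  have \<theta>: "0 < \<theta>" "\<theta> \<le> 1" using r by (auto simp: \<theta>_def)
  define a where "a = a0 / sqrt \<theta>"
  have "expL2_modular u a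
      \<le> (\<integral>\<^sup>+ x. ennreal \<theta> * ennreal (exp ((u x)\<^sup>2 / a0\<^sup>2) - 1) \<partial>lebesgue)"
    unfolding expL2_modular_def
  proof (intro nn_integral_mono)
    fix x
    have "(u x)\<^sup>2 / a\<^sup>2 = \<theta> * ((u x)\<^sup>2 / a0\<^sup>2)"
      using \<theta> a0 by (simp add: a_def power_divide)
    thus "ennreal (exp ((u x)\<^sup>2 / a\<^sup>2) - 1) \<le> ennreal \<theta> * ennreal (exp ((u x)\<^sup>2 / a0\<^sup>2) - 1)"
      using exp_mult_minus_one_le[of \<theta> "(u x)\<^sup>2 / a0\<^sup>2"] \<theta>
      by (simp add: ennreal_mult[symmetric] ennreal_leI)
  qed
  also have "\<dots> = ennreal (\<theta> * r)"
    using meas r \<theta> unfolding expL2_modular_def by (simp add: nn_integral_cmult ennreal_mult)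
  also have "\<dots> \<le> 1" using r by (simp add: \<theta>_def)
  finally show ?thesis using a0 \<theta> by (intro exI[of _ a]) (simp add: a_def)
qed

lemma exp_sq_diff_le:
  fixes s t b :: real
  assumes "0 < b"
  shows "exp ((s - t)\<^sup>2 / (2 * b)\<^sup>2) - 1
           \<le> 1/2 * (exp (s\<^sup>2 / b\<^sup>2) - 1) + 1/2 * (exp (t\<^sup>2 / b\<^sup>2) - 1)"
proof -
  define S T where "S = s\<^sup>2 / b\<^sup>2" and "T = t\<^sup>2 / b\<^sup>2"
  have "(s - t)\<^sup>2 \<le> 2 * (s\<^sup>2 + t\<^sup>2)"
    using sum_squares_ge_zero[of "s + t" 0] by (simp add: power2_eq_square algebra_simps)
  hence "(s - t)\<^sup>2 / (2 * b)\<^sup>2 \<le> 1/2 * S + 1/2 * T"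
    using assms by (simp add: S_def T_def power_mult_distrib field_simps)
  hence "exp ((s - t)\<^sup>2 / (2 * b)\<^sup>2) \<le> exp (1/2 * S + 1/2 * T)" by simp
  also have "\<dots> \<le> 1/2 * exp S + 1/2 * exp T"
    using convex_onD[OF exp_convex, of "1/2" S T] by simp
  finally show ?thesis by (simp add: S_def T_def algebra_simps)
qed

lemma expL2_modular_diff_le_one_exists:
  assumes "u1 \<in> expL2" "u2 \<in> expL2"
  shows "\<exists>a>0. expL2_modular (\<lambda>x. u1 x - u2 x) a \<le> 1"
proof -
  note [measurable] = expL2_measurable[OF assms(1)] expL2_measurable[OF assms(2)]
  obtain a1 a2 where a: "a1 > 0" "expL2_modular u1 a1 \<le> 1" "a2 > 0" "expL2_modular u2 a2 \<le> 1"
    using expL2_modular_le_one_exists assms by meson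
  define b where "b = max a1 a2"
  have b: "0 < b" using a by (simp add: b_def)
  have le1: "expL2_modular u1 b \<le> 1" "expL2_modular u2 b \<le> 1"
    using expL2_modular_antimono[of a1 b u1] expL2_modular_antimono[of a2 b u2] a
    by (auto simp: b_def)
  have "expL2_modular (\<lambda>x. u1 x - u2 x) (2 * b)
     \<le> (\<integral>\<^sup>+ x. ennreal (1/2) * ennreal (exp ((u1 x)\<^sup>2 / b\<^sup>2) - 1)
                 + ennreal (1/2) * ennreal (exp ((u2 x)\<^sup>2 / b\<^sup>2) - 1) \<partial>lebesgue)"
    unfolding expL2_modular_def
  proof (intro nn_integral_mono)
    fix x
    have "exp ((u1 x - u2 x)\<^sup>2 / (2 * b)\<^sup>2) - 1
        \<le> 1/2 * (exp ((u1 x)\<^sup>2 / b\<^sup>2) - 1) + 1/2 * (exp ((u2 x)\<^sup>2 / b\<^sup>2) - 1)"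
      by (rule exp_sq_diff_le[OF b])
    hence "ennreal (exp ((u1 x - u2 x)\<^sup>2 / (2 * b)\<^sup>2) - 1)
        \<le> ennreal (1/2 * (exp ((u1 x)\<^sup>2 / b\<^sup>2) - 1) + 1/2 * (exp ((u2 x)\<^sup>2 / b\<^sup>2) - 1))"
      by (rule ennreal_leI)
    also have "\<dots> = ennreal (1/2) * ennreal (exp ((u1 x)\<^sup>2 / b\<^sup>2) - 1)
                   + ennreal (1/2) * ennreal (exp ((u2 x)\<^sup>2 / b\<^sup>2) - 1)"
      by (simp only: ennreal_plus ennreal_mult mult_nonneg_nonneg divide_nonneg_nonneg zero_le_one
          zero_le_numeral diff_ge_0_iff_ge one_le_exp_iff zero_le_power2)
    finally show "ennreal (exp ((u1 x - u2 x)\<^sup>2 / (2 * b)\<^sup>2) - 1)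
        \<le> ennreal (1/2) * ennreal (exp ((u1 x)\<^sup>2 / b\<^sup>2) - 1)
           + ennreal (1/2) * ennreal (exp ((u2 x)\<^sup>2 / b\<^sup>2) - 1)" .
  qed
  also have "\<dots> = ennreal (1/2) * (expL2_modular u1 b + expL2_modular u2 b)"
    unfolding expL2_modular_def by (simp add: nn_integral_cmult nn_integral_add distrib_left)
  also have "\<dots> \<le> ennreal (1/2) * ennreal 2"
    using add_mono[OF le1] by (intro mult_left_mono) (auto simp: one_add_one)
  also have "\<dots> = 1" by (subst ennreal_mult[symmetric]) auto
  finally show ?thesis using b by (intro exI[of _ "2 * b"]) auto
qed

lemma expL2_modular_le_one_at_norm_bound:
  assumes u: "u \<in> expL2" and K: "0 < K" and norm: "expL2_norm u \<le> K"
  shows "expL2_modular u K \<le> 1"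
proof -
  note meas = expL2_measurable[OF u]
  have above: "expL2_modular u a \<le> 1" if "K < a" for a
    using expL2_modular_le_one_above_norm[OF expL2_modular_le_one_exists[OF u]] norm that by simp
  define g where "g n x = ennreal (exp ((u x)\<^sup>2 / (K + 1 / Suc n)\<^sup>2) - 1)" for n x
  have "(\<lambda>n. g n x) \<longlonglongrightarrow> ennreal (exp ((u x)\<^sup>2 / K\<^sup>2) - 1)" for x
  proof -
    have "(\<lambda>n. K + 1 / real (Suc n)) \<longlonglongrightarrow> K + 0"
      by (intro tendsto_add tendsto_const LIMSEQ_inverse_real_of_nat[unfolded inverse_eq_divide])
    thus ?thesis unfolding g_def using K by (auto intro!: tendsto_intros tendsto_ennrealI)
  qed
  hence "liminf (\<lambda>n. g n x) = ennreal (exp ((u x)\<^sup>2 / K\<^sup>2) - 1)" for x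
    by (intro lim_imp_Liminf) simp_all
  hence "expL2_modular u K = (\<integral>\<^sup>+ x. liminf (\<lambda>n. g n x) \<partial>lebesgue)"
    unfolding expL2_modular_def by simp
  also have "\<dots> \<le> liminf (\<lambda>n. integral\<^sup>N lebesgue (g n))"
    by (rule nn_integral_liminf) (use meas in \<open>unfold g_def, measurable\<close>)
  also have "\<dots> \<le> 1"
  proof (intro Liminf_le always_eventually allI)
    fix n
    show "integral\<^sup>N lebesgue (g n) \<le> 1"
      using above[of "K + 1 / Suc n"] unfolding g_def expL2_modular_def by simp
  qed simp
  finally show ?thesis .
qed

lemma power2_powr:
  fixes x r :: real
  assumes "0 \<le> x"
  shows "(x\<^sup>2) powr r = x powr (2 * r)"
proof (cases "x = 0")
  case False
  hence "x\<^sup>2 = x powr 2" using assms by (simp add: powr_numeral)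
  thus ?thesis by (simp add: powr_powr)
qed simp

lemma nn_integral_powr_le_expL2_modular:
  assumes meas: "u \<in> borel_measurable lebesgue" and a: "0 < a"
    and le1: "expL2_modular u a \<le> 1" and p: "2 \<le> p"
  shows "(\<integral>\<^sup>+ x. ennreal (\<bar>u x\<bar> powr p) \<partial>lebesgue) \<le> ennreal (moment_const (p/2) * a powr p)"
proof -
  let ?c = "moment_const (p/2) * a powr p"
  have "(\<integral>\<^sup>+ x. ennreal (\<bar>u x\<bar> powr p) \<partial>lebesgue)
      \<le> (\<integral>\<^sup>+ x. ennreal ?c * ennreal (exp ((u x)\<^sup>2 / a\<^sup>2) - 1) \<partial>lebesgue)"
  proof (intro nn_integral_mono)
    fix x
    have scale: "(\<bar>u x\<bar> / a) powr p = ((u x)\<^sup>2 / a\<^sup>2) powr (p/2)"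
      using power2_powr[of "\<bar>u x\<bar> / a" "p/2"] a by (simp add: power_divide)
    have "\<bar>u x\<bar> powr p = ((u x)\<^sup>2 / a\<^sup>2) powr (p/2) * a powr p"
      using powr_mult[of "\<bar>u x\<bar> / a" a p] a by (simp add: scale[symmetric])
    also have "\<dots> \<le> moment_const (p/2) * (exp ((u x)\<^sup>2 / a\<^sup>2) - 1) * a powr p"
      using p by (intro mult_right_mono powr_le_moment_const_exp) auto
    finally show "ennreal (\<bar>u x\<bar> powr p) \<le> ennreal ?c * ennreal (exp ((u x)\<^sup>2 / a\<^sup>2) - 1)"
      using moment_const_ge_1[of "p/2"]
      by (simp add: ennreal_mult[symmetric] ennreal_leI mult_ac)
  qed
  also have "\<dots> = ennreal ?c * expL2_modular u a"
    unfolding expL2_modular_def using meas by (intro nn_integral_cmult, measurable)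
  also have "\<dots> \<le> ennreal ?c" using le1 mult_left_mono[OF le1, of "ennreal ?c"] by simp
  finally show ?thesis .
qed

lemma nn_integral_exp_minus_one_powr_le_one:
  assumes le1: "expL2_modular u K \<le> 1" and K: "0 < K"
    and lam: "0 < lam" and q: "1 \<le> q" and hK: "4 * lam * q * K\<^sup>2 \<le> 1"
  shows "(\<integral>\<^sup>+ x. ennreal ((exp (2 * lam * (u x)\<^sup>2) - 1) powr (2 * q)) \<partial>lebesgue) \<le> 1"
proof -
  have "(\<integral>\<^sup>+ x. ennreal ((exp (2 * lam * (u x)\<^sup>2) - 1) powr (2 * q)) \<partial>lebesgue)
      \<le> expL2_modular u K"
    unfolding expL2_modular_def
  proof (intro nn_integral_mono ennreal_leI)
    fix x
    have "(exp (2 * lam * (u x)\<^sup>2) - 1) powr (2 * q) \<le> exp ((2 * q) * (2 * lam * (u x)\<^sup>2)) - 1"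
      using lam q by (intro exp_minus_one_powr_le) auto
    also have "(2 * q) * (2 * lam * (u x)\<^sup>2) \<le> (u x)\<^sup>2 / K\<^sup>2"
      using mult_right_mono[OF hK, of "(u x)\<^sup>2"] K by (simp add: pos_le_divide_eq algebra_simps)
    finally show "(exp (2 * lam * (u x)\<^sup>2) - 1) powr (2 * q) \<le> exp ((u x)\<^sup>2 / K\<^sup>2) - 1"
      by simp
  qed
  with le1 show ?thesis by simp
qed

lemma AE_abs_le_Linf_norm:
  assumes "v \<in> Linf"
  shows "AE x in lebesgue. \<bar>v x\<bar> \<le> Linf_norm v"
proof -
  have "esssup lebesgue (\<lambda>x. ereal \<bar>v x\<bar>) < \<infinity>" using assms unfolding Linf_def by auto
  with esssup_AE[of "\<lambda>x. ereal \<bar>v x\<bar>" lebesgue] show ?thesis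
    unfolding Linf_norm_def
    by (elim eventually_mono) (cases "esssup lebesgue (\<lambda>x. ereal \<bar>v x\<bar>)"; auto)
qed

lemma growth_bound_imp_continuous:
  fixes f :: "real \<Rightarrow> real"
  assumes growth: "\<And>u v. \<bar>f u - f v\<bar> \<le> C * \<bar>u - v\<bar> * (exp (lam * u\<^sup>2) + exp (lam * v\<^sup>2))"
  shows "continuous_on UNIV f"
proof -
  have "isCont f u" for u
  proof -
    have "((\<lambda>v. C * \<bar>v - u\<bar> * (exp (lam * v\<^sup>2) + exp (lam * u\<^sup>2))) \<longlongrightarrow>
           C * \<bar>u - u\<bar> * (exp (lam * u\<^sup>2) + exp (lam * u\<^sup>2))) (at u)"
      by (intro tendsto_intros)
    hence "((\<lambda>v. C * \<bar>v - u\<bar> * (exp (lam * v\<^sup>2) + exp (lam * u\<^sup>2))) \<longlongrightarrow> 0) (at u)"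
      by simp
    hence "((\<lambda>v. f v - f u) \<longlongrightarrow> 0) (at u)"
      by (rule Lim_null_comparison[rotated]) (simp add: growth)
    thus ?thesis by (simp add: isCont_def LIM_zero_iff)
  qed
  thus ?thesis by (simp add: continuous_at_imp_continuous_on)
qed

lemma growth_shift_bound:
  fixes f :: "real \<Rightarrow> real"
  assumes growth: "\<And>u v. \<bar>f u - f v\<bar> \<le> C * \<bar>u - v\<bar> * (exp (lam * u\<^sup>2) + exp (lam * v\<^sup>2))"
    and C: "0 < C" and lam: "0 < lam" and c: "\<bar>c\<bar> \<le> M"
  shows "\<bar>f (a + c) - f (b + c)\<bar> \<le> C * exp (2 * lam * M\<^sup>2) * \<bar>a - b\<bar>
           * (2 + (exp (2 * lam * a\<^sup>2) - 1) + (exp (2 * lam * b\<^sup>2) - 1))"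
proof -
  have shift: "exp (lam * (x + c)\<^sup>2) \<le> exp (2 * lam * M\<^sup>2) * exp (2 * lam * x\<^sup>2)" for x
  proof -
    have "c\<^sup>2 \<le> M\<^sup>2" using c by (metis abs_ge_zero power2_abs power_mono)
    moreover have "(x + c)\<^sup>2 \<le> 2 * x\<^sup>2 + 2 * c\<^sup>2"
      using sum_squares_ge_zero[of "x - c" 0] by (simp add: power2_eq_square algebra_simps)
    ultimately have "lam * (x + c)\<^sup>2 \<le> 2 * lam * M\<^sup>2 + 2 * lam * x\<^sup>2"
      using mult_left_mono[of "(x + c)\<^sup>2" "2 * M\<^sup>2 + 2 * x\<^sup>2" lam] lam by (simp add: algebra_simps)
    thus ?thesis by (simp add: exp_add[symmetric])
  qed
  have "\<bar>f (a + c) - f (b + c)\<bar> \<le> C * \<bar>a - b\<bar> * (exp (lam * (a + c)\<^sup>2) + exp (lam * (b + c)\<^sup>2))"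
    using growth[of "a + c" "b + c"] by simp
  also have "\<dots> \<le> C * \<bar>a - b\<bar> * (exp (2 * lam * M\<^sup>2) * exp (2 * lam * a\<^sup>2)
                  + exp (2 * lam * M\<^sup>2) * exp (2 * lam * b\<^sup>2))"
    using C by (intro mult_left_mono add_mono shift) auto
  finally show ?thesis by (simp add: algebra_simps)
qed

lemma ennreal_sum4_mult:
  fixes k1 k2 k3 k4 g1 g2 g3 g4 :: real
  assumes "0 \<le> k1" "0 \<le> k2" "0 \<le> k3" "0 \<le> k4" "0 \<le> g1" "0 \<le> g2" "0 \<le> g3" "0 \<le> g4"
  shows "ennreal (k1 * g1 + k2 * g2 + k3 * g3 + k4 * g4) =
    ennreal k1 * ennreal g1 + ennreal k2 * ennreal g2 + ennreal k3 * ennreal g3 + ennreal k4 * ennreal g4"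
  using assms by (simp add: ennreal_plus ennreal_mult)

lemma nn_integral_powr_le_of_growth_bound:
  fixes F D E1 E2 :: "'b \<Rightarrow> real"
  assumes meas[measurable]: "D \<in> borel_measurable M" "E1 \<in> borel_measurable M" "E2 \<in> borel_measurable M"
    and A: "0 \<le> A" and q: "1 \<le> q" and a: "0 < a" and E: "\<And>x. 0 \<le> E1 x" "\<And>x. 0 \<le> E2 x"
    and growth: "AE x in M. \<bar>F x\<bar> \<le> A * \<bar>D x\<bar> * (2 + E1 x + E2 x)"
    and D_q: "(\<integral>\<^sup>+ x. ennreal (\<bar>D x\<bar> powr q) \<partial>M) \<le> ennreal (c1 * a powr q)"
    and D_2q: "(\<integral>\<^sup>+ x. ennreal (\<bar>D x\<bar> powr (2 * q)) \<partial>M) \<le> ennreal (c2 * a powr (2 * q))"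
    and E1_2q: "(\<integral>\<^sup>+ x. ennreal (E1 x powr (2 * q)) \<partial>M) \<le> 1"
    and E2_2q: "(\<integral>\<^sup>+ x. ennreal (E2 x powr (2 * q)) \<partial>M) \<le> 1"
    and c: "0 \<le> c1" "0 \<le> c2"
  shows "(\<integral>\<^sup>+ x. ennreal (\<bar>F x\<bar> powr q) \<partial>M)
           \<le> ennreal ((3 * A) powr q * (2 powr q * c1 + c2 + 1) * a powr q)"
proof -
  define t where "t = a powr q"
  define P where "P = (3 * A) powr q"
  have t: "0 < t" using a by (simp add: t_def)
  have k: "0 \<le> P * 2 powr q" "0 \<le> P / t" "0 \<le> P * t / 2" using t by (auto simp: P_def)
  let ?g = "\<lambda>x. ennreal (P * 2 powr q) * ennreal (\<bar>D x\<bar> powr q)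
       + ennreal (P / t) * ennreal (\<bar>D x\<bar> powr (2 * q))
       + ennreal (P * t / 2) * ennreal (E1 x powr (2 * q))
       + ennreal (P * t / 2) * ennreal (E2 x powr (2 * q))"
  have "(\<integral>\<^sup>+ x. ennreal (\<bar>F x\<bar> powr q) \<partial>M) \<le> (\<integral>\<^sup>+ x. ?g x \<partial>M)"
  proof (intro nn_integral_mono_AE eventually_mono[OF growth])
    fix x assume "\<bar>F x\<bar> \<le> A * \<bar>D x\<bar> * (2 + E1 x + E2 x)"
    hence "\<bar>F x\<bar> powr q \<le> (P * 2 powr q) * \<bar>D x\<bar> powr q + (P / t) * \<bar>D x\<bar> powr (2 * q)
           + (P * t / 2) * E1 x powr (2 * q) + (P * t / 2) * E2 x powr (2 * q)"
      using powr_growth_split[of A q t "\<bar>D x\<bar>" "E1 x" "E2 x" "\<bar>F x\<bar>"] A q t E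
      by (simp add: P_def algebra_simps)
    hence "ennreal (\<bar>F x\<bar> powr q) \<le> ennreal ((P * 2 powr q) * \<bar>D x\<bar> powr q
           + (P / t) * \<bar>D x\<bar> powr (2 * q) + (P * t / 2) * E1 x powr (2 * q)
           + (P * t / 2) * E2 x powr (2 * q))"
      by (rule ennreal_leI)
    also have "\<dots> = ?g x" using k E by (intro ennreal_sum4_mult) auto
    finally show "ennreal (\<bar>F x\<bar> powr q) \<le> ?g x" .
  qed
  also have "\<dots> = ennreal (P * 2 powr q) * (\<integral>\<^sup>+ x. ennreal (\<bar>D x\<bar> powr q) \<partial>M)
      + ennreal (P / t) * (\<integral>\<^sup>+ x. ennreal (\<bar>D x\<bar> powr (2 * q)) \<partial>M)
      + ennreal (P * t / 2) * (\<integral>\<^sup>+ x. ennreal (E1 x powr (2 * q)) \<partial>M)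
      + ennreal (P * t / 2) * (\<integral>\<^sup>+ x. ennreal (E2 x powr (2 * q)) \<partial>M)"
    by (simp add: nn_integral_add nn_integral_cmult)
  also have "\<dots> \<le> ennreal (P * 2 powr q) * ennreal (c1 * a powr q)
      + ennreal (P / t) * ennreal (c2 * a powr (2 * q))
      + ennreal (P * t / 2) * ennreal 1 + ennreal (P * t / 2) * ennreal 1"
    using D_q D_2q E1_2q E2_2q by (intro add_mono mult_left_mono) auto
  also have "\<dots> = ennreal ((P * 2 powr q) * (c1 * a powr q) + (P / t) * (c2 * a powr (2 * q))
      + (P * t / 2) * 1 + (P * t / 2) * 1)"
    using k c by (intro ennreal_sum4_mult[symmetric]) auto
  also have "(P * 2 powr q) * (c1 * a powr q) + (P / t) * (c2 * a powr (2 * q))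
       + (P * t / 2) * 1 + (P * t / 2) * 1
       = (3 * A) powr q * (2 powr q * c1 + c2 + 1) * a powr q"
  proof -
    have "a powr (2 * q) = t * t" unfolding t_def by (simp add: powr_add[symmetric])
    thus ?thesis using t unfolding P_def t_def by (simp add: field_simps)
  qed
  finally show ?thesis .
qed

definition growth_const :: "real \<Rightarrow> real" where
  "growth_const q = 2 powr q * moment_const (q/2) + moment_const q + 1"

lemma growth_const_pos: "0 < growth_const q"
  using moment_const_ge_1[of q] moment_const_ge_1[of "q/2"]
  unfolding growth_const_def by (simp add: add_pos_nonneg)

context
  fixes f :: "real \<Rightarrow> real" and C lam q K :: real and v w1 w2 :: "'a::euclidean_space \<Rightarrow> real"
  assumes growth: "\<And>u v. \<bar>f u - f v\<bar> \<le> C * \<bar>u - v\<bar> * (exp (lam * u\<^sup>2) + exp (lam * v\<^sup>2))"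
    and C: "0 < C" and lam: "0 < lam" and q: "2 \<le> q"
    and v: "v \<in> Linf" and w: "w1 \<in> expL2" "w2 \<in> expL2" and K: "0 < K"
    and w_K: "expL2_norm w1 \<le> K" "expL2_norm w2 \<le> K" and hK: "4 * lam * q * K\<^sup>2 \<le> 1"
begin

lemma Lq_norm_pow_diff_le_above_norm:
  assumes a: "expL2_norm (\<lambda>x. w1 x - w2 x) < a"
  shows "Lq_norm_pow q (\<lambda>x. f (w1 x + v x) - f (w2 x + v x))
           \<le> ennreal ((3 * (C * exp (2 * lam * (Linf_norm v)\<^sup>2))) powr q * growth_const q * a powr q)"
proof -
  define D where "D = (\<lambda>x. w1 x - w2 x)"
  note [measurable] = expL2_measurable[OF w(1)] expL2_measurable[OF w(2)]
  have [measurable]: "D \<in> borel_measurable lebesgue" unfolding D_def by measurable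
  have D_le1: "expL2_modular D a \<le> 1"
    using expL2_modular_diff_le_one_exists[OF w] expL2_modular_le_one_above_norm a
    unfolding D_def by blast
  have a0: "0 < a"
    using expL2_norm_nonneg[OF expL2_modular_diff_le_one_exists[OF w]] a by linarith
  have growth_AE: "AE x in lebesgue. \<bar>f (w1 x + v x) - f (w2 x + v x)\<bar>
      \<le> C * exp (2 * lam * (Linf_norm v)\<^sup>2) * \<bar>D x\<bar>
         * (2 + (exp (2 * lam * (w1 x)\<^sup>2) - 1) + (exp (2 * lam * (w2 x)\<^sup>2) - 1))"
    using AE_abs_le_Linf_norm[OF v]
    by (elim eventually_mono) (unfold D_def, rule growth_shift_bound[OF growth C lam])
  have "Lq_norm_pow q (\<lambda>x. f (w1 x + v x) - f (w2 x + v x))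
      \<le> ennreal ((3 * (C * exp (2 * lam * (Linf_norm v)\<^sup>2))) powr q
                  * (2 powr q * moment_const (q/2) + moment_const q + 1) * a powr q)"
    unfolding Lq_norm_pow_def
  proof (rule nn_integral_powr_le_of_growth_bound[OF _ _ _ _ _ a0 _ _ growth_AE])
    show "(\<integral>\<^sup>+ x. ennreal (\<bar>D x\<bar> powr q) \<partial>lebesgue) \<le> ennreal (moment_const (q/2) * a powr q)"
      by (rule nn_integral_powr_le_expL2_modular[OF _ a0 D_le1 q]) measurable
    show "(\<integral>\<^sup>+ x. ennreal (\<bar>D x\<bar> powr (2 * q)) \<partial>lebesgue) \<le> ennreal (moment_const q * a powr (2 * q))"
      using nn_integral_powr_le_expL2_modular[OF _ a0 D_le1, of "2 * q"] q by simp
    show "(\<integral>\<^sup>+ x. ennreal ((exp (2 * lam * (w1 x)\<^sup>2) - 1) powr (2 * q)) \<partial>lebesgue) \<le> 1"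
      "(\<integral>\<^sup>+ x. ennreal ((exp (2 * lam * (w2 x)\<^sup>2) - 1) powr (2 * q)) \<partial>lebesgue) \<le> 1"
      using q by (intro nn_integral_exp_minus_one_powr_le_one[OF expL2_modular_le_one_at_norm_bound
            K lam _ hK] w w_K K; simp)+
  qed (use C lam q moment_const_ge_1[of q] moment_const_ge_1[of "q/2"] in \<open>auto simp: zero_le_mult_iff\<close>)
  thus ?thesis by (simp add: growth_const_def)
qed

lemma Lq_norm_pow_diff_le:
  shows "Lq_norm_pow q (\<lambda>x. f (w1 x + v x) - f (w2 x + v x))
           \<le> ennreal ((3 * (C * exp (2 * lam * (Linf_norm v)\<^sup>2))) powr q * growth_const q
                       * expL2_norm (\<lambda>x. w1 x - w2 x) powr q)"
proof (rule ennreal_le_mult_powr_at_right)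
  show "0 \<le> expL2_norm (\<lambda>x. w1 x - w2 x)"
    by (rule expL2_norm_nonneg[OF expL2_modular_diff_le_one_exists[OF w]])
  show "0 \<le> (3 * (C * exp (2 * lam * (Linf_norm v)\<^sup>2))) powr q * growth_const q"
    using growth_const_pos[of q] by simp
qed (use q Lq_norm_pow_diff_le_above_norm in auto)

end

lemma powr_mult_root:
  fixes x y G q :: real
  assumes "0 \<le> x" "0 \<le> y" "0 < G" "0 < q"
  shows "(x * G powr (1/q) * y) powr q = x powr q * G * y powr q"
  using assms by (simp add: powr_mult powr_powr)

theorem lemma4p4:
  fixes f :: "real \<Rightarrow> real" and C lam q :: real
  assumes f0: "f 0 = 0"
    and C_pos: "C > 0" and lam_pos: "lam > 0"
    and f_growth: "\<And>u v. \<bar>f u - f v\<bar> \<le> C * \<bar>u - v\<bar> * (exp (lam * u\<^sup>2) + exp (lam * v\<^sup>2))"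
    and q: "2 \<le> q"
  shows "\<exists>Cq > 0. \<forall>(v :: 'a::euclidean_space \<Rightarrow> real) w1 w2 K.
           v \<in> Linf \<and> w1 \<in> expL2 \<and> w2 \<in> expL2 \<and> K > 0 \<and>
           expL2_norm w1 \<le> K \<and> expL2_norm w2 \<le> K \<and> 4 * lam * q * K\<^sup>2 \<le> 1
           \<longrightarrow> (\<lambda>x. f (w1 x + v x) - f (w2 x + v x)) \<in> borel_measurable lebesgue \<and>
               Lq_norm_pow q (\<lambda>x. f (w1 x + v x) - f (w2 x + v x))
                 \<le> ennreal ((Cq * exp (2 * lam * (Linf_norm v)\<^sup>2) * expL2_norm (\<lambda>x. w1 x - w2 x)) powr q)"
proof (intro exI[of _ "3 * C * growth_const q powr (1/q)"] conjI allI impI)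
  show "0 < 3 * C * growth_const q powr (1/q)" using C_pos growth_const_pos[of q] by simp
  fix v w1 w2 :: "'a \<Rightarrow> real" and K :: real
  assume "v \<in> Linf \<and> w1 \<in> expL2 \<and> w2 \<in> expL2 \<and> K > 0 \<and>
           expL2_norm w1 \<le> K \<and> expL2_norm w2 \<le> K \<and> 4 * lam * q * K\<^sup>2 \<le> 1"
  hence v: "v \<in> Linf" and w: "w1 \<in> expL2" "w2 \<in> expL2" and K: "0 < K"
    and w_K: "expL2_norm w1 \<le> K" "expL2_norm w2 \<le> K" and hK: "4 * lam * q * K\<^sup>2 \<le> 1"
    by auto
  note [measurable] = expL2_measurable[OF w(1)] expL2_measurable[OF w(2)]
    borel_measurable_continuous_onI[OF growth_bound_imp_continuous[OF f_growth]]
  have [measurable]: "v \<in> borel_measurable lebesgue" using v unfolding Linf_def by auto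
  show "(\<lambda>x. f (w1 x + v x) - f (w2 x + v x)) \<in> borel_measurable lebesgue" by measurable
  let ?A = "3 * (C * exp (2 * lam * (Linf_norm v)\<^sup>2))" and ?n = "expL2_norm (\<lambda>x. w1 x - w2 x)"
  have "Lq_norm_pow q (\<lambda>x. f (w1 x + v x) - f (w2 x + v x))
      \<le> ennreal (?A powr q * growth_const q * ?n powr q)"
    by (rule Lq_norm_pow_diff_le[OF f_growth C_pos lam_pos q v w K w_K hK])
  also have "?A powr q * growth_const q * ?n powr q = (?A * growth_const q powr (1/q) * ?n) powr q"
    using C_pos q growth_const_pos[of q] expL2_norm_nonneg[OF expL2_modular_diff_le_one_exists[OF w]]
    by (intro powr_mult_root[symmetric]) auto
  finally show "Lq_norm_pow q (\<lambda>x. f (w1 x + v x) - f (w2 x + v x))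
      \<le> ennreal ((3 * C * growth_const q powr (1/q) * exp (2 * lam * (Linf_norm v)\<^sup>2) * ?n) powr q)"
    by (simp add: mult_ac)
qed

end
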